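(* Let $A\in\mathbb{R}^{m\times n}$ with $r:=\mathrm{rank}(A)$. Let $T$ be an ordered subset of $r$ elements of $\{1,\dots,n\}$ and let $\hat A:=A[:,T]$ be the $m\times r$ submatrix of $A$ formed by the columns $T$. If $\mathrm{rank}(\hat A)=r$, let $\hat H:=\hat A^+=(\hat A^\top\hat A)^{-1}\hat A^\top$, and let $H\in\mathbb{R}^{n\times m}$ be the matrix whose rows indexed by $T$ are given by $\hat H$ (in the order of $T$) and all other rows are zero. Then $H$ satisfies $AHA=A$, $HAH=H$ and $(AH)^\top=AH$; i.e., $H$ is an ah-symmetric reflexive generalized inverse of $A$.
   Context: $A[:,T]$ denotes the submatrix of $A$ formed by the columns with indices in $T$. A matrix $H$ is a generalized inverse of $A$ if $AHA=A$, reflexive if additionally $HAH=H$, and ah-symmetric if $AH$ is symmetric. *)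

theory Defs
  imports "Jordan_Normal_Form.DL_Rank" "Jordan_Normal_Form.Gauss_Jordan_Elimination"
begin

definition col_submat :: "'a mat \<Rightarrow> nat list \<Rightarrow> 'a mat" where
  "col_submat A T = mat (dim_row A) (length T) (\<lambda>(i,j). A $$ (i, T ! j))"

definition mat_rank :: "'a :: field mat \<Rightarrow> nat" where
  "mat_rank A = vec_space.rank (dim_row A) A"

definition embed_rows :: "nat \<Rightarrow> nat list \<Rightarrow> 'a :: zero mat \<Rightarrow> 'a mat" where
  "embed_rows n T Hh = mat n (dim_col Hh)
     (\<lambda>(k,i). if k \<in> set T then Hh $$ (THE j. j < length T \<and> T ! j = k, i) else 0)"

end

theory Submission
  imports Defs
begin

text \<open>Since \<open>A[:,T]\<close> has rank \<open>r = rank A\<close>, its columns are a basis of the column space of \<open>A\<close>,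
  so \<open>A = A[:,T] X\<close> for some \<open>X\<close>; and \<open>A[:,T]\<close> has trivial kernel, so its Gram matrix is
  invertible and \<open>\<hat>H = (A[:,T]\<^sup>T A[:,T])\<inverse> A[:,T]\<^sup>T\<close> is a left inverse with \<open>A[:,T] \<hat>H\<close>
  symmetric. Writing \<open>H = E \<hat>H\<close> with \<open>E\<close> the 0/1 matrix selecting the columns \<open>T\<close>
  (so \<open>A E = A[:,T]\<close>), the three identities follow from \<open>\<hat>H A[:,T] = 1\<close> and the symmetry
  of \<open>A[:,T] \<hat>H\<close>.\<close>

context vec_space
begin

lemma full_col_rank_distinct_cols:
  assumes B: "B \<in> carrier_mat n r" and rk: "rank B = r"
  shows "distinct (cols B)"
proof (rule ccontr)
  assume nd: "\<not> distinct (cols B)"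
  obtain S where S: "maximal S (\<lambda>U. U \<subseteq> set (cols B) \<and> lin_indpt U)"
    using maximal_exists[of "\<lambda>U. U \<subseteq> set (cols B) \<and> lin_indpt U" "card (set (cols B))" "{}"]
    by (meson List.finite_set card_mono empty_iff empty_subsetI finite_lin_indpt2 rev_finite_subset)
  then have "card S \<le> card (set (cols B))" by (simp add: card_mono maximal_def)
  also have "\<dots> < r" using nd B
    by (metis card_distinct card_length carrier_matD(2) cols_length nat_less_le)
  finally show False using rank_card_indpt[OF B S] rk by simp
qed

lemma full_col_rank_lin_indpt:
  assumes "B \<in> carrier_mat n r" and "rank B = r"
  shows "lin_indpt (set (cols B))"
  using full_rank_lin_indpt[OF assms full_col_rank_distinct_cols[OF assms]] .

lemma full_col_rank_mult_vec_eq_0: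
  assumes B: "B \<in> carrier_mat n r" and rk: "rank B = r"
    and x: "x \<in> carrier_vec r" and Bx: "B *\<^sub>v x = 0\<^sub>v n"
  shows "x = 0\<^sub>v r"
proof (rule ccontr)
  assume "x \<noteq> 0\<^sub>v r"
  from lin_depI[OF B x this Bx full_col_rank_distinct_cols[OF B rk]]
  show False using full_col_rank_lin_indpt[OF B rk] by simp
qed

lemma col_in_span_of_max_rank_subcols:
  assumes A: "A \<in> carrier_mat n nc" and B: "B \<in> carrier_mat n r"
    and rkB: "rank B = r" and rkA: "rank A = r"
    and sub: "set (cols B) \<subseteq> set (cols A)" and j: "j < nc"
  shows "col A j \<in> span (set (cols B))"
proof (rule ccontr)
  assume ns: "col A j \<notin> span (set (cols B))"
  have SB: "set (cols B) \<subseteq> carrier_vec n" using B cols_dim by blast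
  have nin: "col A j \<notin> set (cols B)" using ns in_own_span[OF SB] by blast
  have "lin_indpt (insert (col A j) (set (cols B)))"
    using lin_dep_iff_in_span[OF SB full_col_rank_lin_indpt[OF B rkB] _ nin] ns A j by simp
  moreover have "insert (col A j) (set (cols B)) \<subseteq> set (cols A)"
    using sub A j by (simp add: cols_def)
  ultimately have "card (insert (col A j) (set (cols B))) \<le> r"
    using rank_ge_card_indpt[OF A] rkA by simp
  moreover have "card (insert (col A j) (set (cols B))) = r + 1"
    using nin full_col_rank_distinct_cols[OF B rkB] B by (simp add: distinct_card)
  ultimately show False by simp
qed

lemma factor_through_max_rank_subcols:
  assumes A: "A \<in> carrier_mat n nc" and B: "B \<in> carrier_mat n r"
    and rkB: "rank B = r" and rkA: "rank A = r"
    and sub: "set (cols B) \<subseteq> set (cols A)"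
  obtains X where "X \<in> carrier_mat r nc" "B * X = A"
proof -
  have "\<exists>x. x \<in> carrier_vec r \<and> B *\<^sub>v x = col A j" if "j < nc" for j
    using col_in_span_of_max_rank_subcols[OF assms that] B
    unfolding col_space_eq[OF B, unfolded col_space_def] by auto
  then obtain x where x: "\<And>j. j < nc \<Longrightarrow> x j \<in> carrier_vec r \<and> B *\<^sub>v x j = col A j"
    by metis
  define X where "X = mat r nc (\<lambda>(i, j). x j $ i)"
  have X: "X \<in> carrier_mat r nc" unfolding X_def by simp
  have "B * X = A"
  proof (rule mat_col_eqI)
    fix j assume "j < dim_col A"
    hence j: "j < nc" using A by simp
    have "col X j = x j" using x[OF j] j unfolding X_def by (intro eq_vecI) auto
    thus "col (B * X) j = col A j" using col_mult2[OF B X j] x[OF j] by simp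
  qed (use A B X in auto)
  with X show thesis by (rule that)
qed

end

lemma scalar_prod_self_eq_0_iff:
  fixes v :: "'a :: linordered_field vec"
  assumes "v \<in> carrier_vec k"
  shows "v \<bullet> v = 0 \<longleftrightarrow> v = 0\<^sub>v k"
proof
  assume "v \<bullet> v = 0"
  hence "\<forall>i\<in>{0..<k}. v $ i * v $ i = 0"
    using assms by (subst (asm) scalar_prod_def, subst (asm) sum_nonneg_eq_0_iff) auto
  thus "v = 0\<^sub>v k" using assms by (intro eq_vecI) auto
qed (use assms in simp)

lemma det_gram_mat_nonzero:
  fixes B :: "'a :: linordered_field mat"
  assumes B: "B \<in> carrier_mat m r"
    and inj: "\<And>x. x \<in> carrier_vec r \<Longrightarrow> B *\<^sub>v x = 0\<^sub>v m \<Longrightarrow> x = 0\<^sub>v r"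
  shows "det (B\<^sup>T * B) \<noteq> 0"
proof
  assume "det (B\<^sup>T * B) = 0"
  then obtain v where v: "v \<in> carrier_vec r" "v \<noteq> 0\<^sub>v r" "B\<^sup>T * B *\<^sub>v v = 0\<^sub>v r"
    using det_0_iff_vec_prod_zero_field[of "B\<^sup>T * B" r] B by auto
  have Bv: "B *\<^sub>v v \<in> carrier_vec m" using B v(1) by simp
  have "(B *\<^sub>v v) \<bullet> (B *\<^sub>v v) = (B\<^sup>T *\<^sub>v (B *\<^sub>v v)) \<bullet> v"
    using transpose_vec_mult_scalar[OF B v(1) Bv] by simp
  also have "\<dots> = (B\<^sup>T * B *\<^sub>v v) \<bullet> v"
    using B v(1) by (subst assoc_mult_mat_vec) auto
  also have "\<dots> = 0" using v by simp
  finally have "B *\<^sub>v v = 0\<^sub>v m" using scalar_prod_self_eq_0_iff[OF Bv] by simp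
  with inj v show False by blast
qed

lemma inverse_of_symmetric_symmetric:
  fixes M :: "'a :: comm_ring_1 mat"
  assumes M: "M \<in> carrier_mat r r" and Mi: "Mi \<in> carrier_mat r r"
    and sym: "M\<^sup>T = M" and inv: "M * Mi = 1\<^sub>m r"
  shows "Mi\<^sup>T = Mi"
proof -
  have "Mi\<^sup>T = Mi\<^sup>T * (M * Mi)" using inv Mi by simp
  also have "\<dots> = (M * Mi)\<^sup>T * Mi"
    using M Mi sym by (simp add: assoc_mult_mat[of _ r r _ r _ r] transpose_mult[OF M Mi])
  finally show ?thesis using inv Mi by simp
qed

text \<open>For \<open>B\<close> of full column rank this is the Moore--Penrose inverse \<open>(B\<^sup>T B)\<inverse> B\<^sup>T\<close>;
  otherwise \<open>the None\<close> makes it meaningless.\<close>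

definition left_pinv :: "'a :: field mat \<Rightarrow> 'a mat" where
  "left_pinv B = the (mat_inverse (B\<^sup>T * B)) * B\<^sup>T"

lemma left_pinv:
  fixes B :: "'a :: field mat"
  assumes B: "B \<in> carrier_mat m r" and det: "det (B\<^sup>T * B) \<noteq> 0"
  shows "left_pinv B \<in> carrier_mat r m" "left_pinv B * B = 1\<^sub>m r"
    "(B * left_pinv B)\<^sup>T = B * left_pinv B"
proof -
  define M where "M = B\<^sup>T * B"
  have M: "M \<in> carrier_mat r r" using B unfolding M_def by simp
  obtain Mi where Mi_eq: "mat_inverse M = Some Mi"
    using mat_inverse(1)[OF M] det_non_zero_imp_unit[OF M det[folded M_def], of "()"] by fastforce
  from mat_inverse(2)[OF M Mi_eq]
  have inv: "M * Mi = 1\<^sub>m r" "Mi * M = 1\<^sub>m r" and Mi: "Mi \<in> carrier_mat r r" by auto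
  have pinv: "left_pinv B = Mi * B\<^sup>T" unfolding left_pinv_def M_def[symmetric] Mi_eq by simp
  show "left_pinv B \<in> carrier_mat r m" using Mi B pinv by simp
  show "left_pinv B * B = 1\<^sub>m r"
    using Mi B inv by (simp add: pinv M_def assoc_mult_mat[of _ r r _ m _ r])
  have "M\<^sup>T = M" unfolding M_def using B by (simp add: transpose_mult[of _ r m _ r])
  hence Mi_sym: "Mi\<^sup>T = Mi" using inverse_of_symmetric_symmetric[OF M Mi _ inv(1)] by simp
  have "(B * (Mi * B\<^sup>T))\<^sup>T = B * Mi\<^sup>T * B\<^sup>T"
    using B Mi by (simp add: transpose_mult[of _ m r _ m] transpose_mult[of _ r r _ m])
  also have "\<dots> = B * (Mi * B\<^sup>T)" using B Mi Mi_sym by (simp add: assoc_mult_mat[of _ m r _ r _ m])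
  finally show "(B * left_pinv B)\<^sup>T = B * left_pinv B" unfolding pinv .
qed

definition col_selector :: "nat \<Rightarrow> nat list \<Rightarrow> 'a :: {zero, one} mat" where
  "col_selector n T = mat n (length T) (\<lambda>(k, j). if T ! j = k then 1 else 0)"

lemma col_selector_carrier: "col_selector n T \<in> carrier_mat n (length T)"
  unfolding col_selector_def by simp

lemma mult_col_selector:
  fixes A :: "'a :: comm_ring_1 mat"
  assumes A: "A \<in> carrier_mat m n" and T: "set T \<subseteq> {..<n}"
  shows "A * col_selector n T = col_submat A T"
proof (rule eq_matI)
  fix i j assume "i < dim_row (col_submat A T)" "j < dim_col (col_submat A T)"
  hence i: "i < m" and j: "j < length T" using A by (auto simp: col_submat_def)
  have "T ! j < n" using T nth_mem[OF j] by auto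
  then show "(A * col_selector n T) $$ (i, j) = col_submat A T $$ (i, j)"
    using A i j unfolding col_selector_def col_submat_def
    by (simp add: scalar_prod_def if_distrib[of "times _"] cong: if_cong)
qed (use A in \<open>auto simp: col_submat_def col_selector_def\<close>)

lemma embed_rows_eq_col_selector_mult:
  fixes Hh :: "'a :: comm_ring_1 mat"
  assumes T: "distinct T" and Hh: "Hh \<in> carrier_mat (length T) k"
  shows "embed_rows n T Hh = col_selector n T * Hh"
proof (rule eq_matI)
  fix p i assume "p < dim_row (col_selector n T * Hh)" "i < dim_col (col_selector n T * Hh)"
  hence p: "p < n" and i: "i < k" using Hh by (auto simp: col_selector_def)
  have "(col_selector n T * Hh) $$ (p, i) = (\<Sum>j<length T. if T ! j = p then Hh $$ (j, i) else 0)"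
    using Hh p i unfolding col_selector_def
    by (auto simp: scalar_prod_def lessThan_atLeast0 intro!: sum.cong)
  also have "\<dots> = embed_rows n T Hh $$ (p, i)"
  proof (cases "p \<in> set T")
    case True
    then obtain j0 where j0: "j0 < length T" "T ! j0 = p" by (auto simp: in_set_conv_nth)
    have idx: "\<And>j. j < length T \<Longrightarrow> T ! j = p \<longleftrightarrow> j = j0"
      using T j0 by (auto simp: nth_eq_iff_index_eq)
    hence "(THE j. j < length T \<and> T ! j = p) = j0" using j0 by (intro the_equality) auto
    then show ?thesis using True p i Hh j0 idx by (simp add: embed_rows_def cong: if_cong)
  qed (use p i Hh nth_mem in \<open>auto simp: embed_rows_def intro!: sum.neutral\<close>)
  finally show "embed_rows n T Hh $$ (p, i) = (col_selector n T * Hh) $$ (p, i)" ..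
qed (use Hh in \<open>auto simp: embed_rows_def col_selector_def\<close>)

lemma cols_col_submat_subset:
  assumes A: "A \<in> carrier_mat m n" and T: "set T \<subseteq> {..<n}"
  shows "set (cols (col_submat A T)) \<subseteq> set (cols A)"
proof
  fix c assume "c \<in> set (cols (col_submat A T))"
  then obtain j where j: "j < length T" "c = col (col_submat A T) j"
    by (auto simp: in_set_conv_nth col_submat_def)
  hence "c = col A (T ! j)" using A by (auto simp: col_submat_def col_def)
  moreover have "T ! j < n" using T nth_mem[OF j(1)] by auto
  ultimately show "c \<in> set (cols A)" using A by (auto simp: in_set_conv_nth)
qed

lemma reflexive_ah_symmetric_ginverse_through_factor:
  fixes A :: "'a :: comm_ring_1 mat"
  assumes A: "A \<in> carrier_mat m n" and B: "B \<in> carrier_mat m r"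
    and E: "E \<in> carrier_mat n r" and G: "G \<in> carrier_mat r m" and X: "X \<in> carrier_mat r n"
    and AE: "A * E = B" and BX: "B * X = A"
    and GB: "G * B = 1\<^sub>m r" and sym: "(B * G)\<^sup>T = B * G"
  shows "A * (E * G) * A = A \<and> E * G * A * (E * G) = E * G \<and> (A * (E * G))\<^sup>T = A * (E * G)"
proof -
  have AEG: "A * (E * G) = B * G" using A E G AE by (simp add: assoc_mult_mat[symmetric])
  have "B * G * (B * X) = B * (G * B) * X"
    using B G X by (simp add: assoc_mult_mat[of _ m r _ m _ n] assoc_mult_mat[of _ m r _ r _ n]
        assoc_mult_mat[of _ r m _ r _ n])
  hence 1: "A * (E * G) * A = A" using AEG BX GB B X by simp
  have "E * G * A * (E * G) = E * (G * (A * (E * G)))"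
    using assoc_mult_mat[OF E G A] assoc_mult_mat[OF G A mult_carrier_mat[OF E G]]
      assoc_mult_mat[OF E mult_carrier_mat[OF G A] mult_carrier_mat[OF E G]] by simp
  also have "\<dots> = E * G" using AEG GB B G
    by (simp add: assoc_mult_mat[of _ r m _ r _ m, symmetric])
  finally show ?thesis using 1 AEG sym by simp
qed

theorem theorem3p3:
  fixes A :: "real mat" and m n :: nat and T :: "nat list"
  assumes A: "A \<in> carrier_mat m n"
    and T: "distinct T" "set T \<subseteq> {..<n}" "length T = mat_rank A"
    and full: "mat_rank (col_submat A T) = mat_rank A"
  defines "Ahat \<equiv> col_submat A T"
  defines "Hhat \<equiv> the (mat_inverse (Ahat\<^sup>T * Ahat)) * Ahat\<^sup>T"
  defines "H \<equiv> embed_rows n T Hhat"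
  shows "A * H * A = A \<and> H * A * H = H \<and> (A * H)\<^sup>T = A * H"
proof -
  define r where "r = length T"
  have Ahat: "Ahat \<in> carrier_mat m r" using A unfolding Ahat_def col_submat_def r_def by auto
  have rkA: "vec_space.rank m A = r" and rkAhat: "vec_space.rank m Ahat = r"
    using A Ahat T(3) full unfolding r_def mat_rank_def Ahat_def by auto
  obtain X where X: "X \<in> carrier_mat r n" "Ahat * X = A"
    using vec_space.factor_through_max_rank_subcols[OF A Ahat rkAhat rkA]
      cols_col_submat_subset[OF A T(2), folded Ahat_def] by this
  have "det (Ahat\<^sup>T * Ahat) \<noteq> 0"
    using det_gram_mat_nonzero[OF Ahat vec_space.full_col_rank_mult_vec_eq_0[OF Ahat rkAhat]] .
  note pinv = left_pinv[OF Ahat this, unfolded left_pinv_def, folded Hhat_def]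
  have E: "col_selector n T \<in> carrier_mat n r" unfolding r_def by (rule col_selector_carrier)
  have AE: "A * col_selector n T = Ahat"
    unfolding Ahat_def using mult_col_selector[OF A T(2)] .
  have "H = col_selector n T * Hhat"
    unfolding H_def using embed_rows_eq_col_selector_mult[OF T(1) pinv(1)[unfolded r_def]] .
  then show ?thesis
    using reflexive_ah_symmetric_ginverse_through_factor[OF A Ahat E pinv(1) X(1) AE X(2) pinv(2,3)]
    by simp
qed

end
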